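(* Let $\mathcal S=(P_-^\Gamma)_{\Gamma\in F}$ be a subtraction scheme of regular type (RT), and let $\mathcal P_+$ be the induced operator on the group $G$ of characters. Then for all $\phi,\psi\in G$, $$\mathcal P_+\big(\mathcal P_+(\phi)\ast\mathcal P_+(\psi)\big)=\mathcal P_+(\phi)\ast\mathcal P_+(\psi).$$
   Context: Fix a renormalisable quantum field theory. $F$ denotes the set of one-particle-irreducible (1PI) ultraviolet-divergent Feynman graphs, and $H$ the free commutative polynomial algebra over $\mathbb C$ generated by $F$ (product = disjoint union, written by concatenation, unit $\mathbb 1$ = empty graph), graded by loop number, with $H_0=\mathbb C$; $\pi_{(n)}$ is the projection onto $H_n$ and $\phi_{(n)}:=\phi\circ\pi_{(n)}$. For $\Gamma\in F$, a proper spinney $S$ of $\Gamma$ is a nonempty set of pairwise disjoint (non-overlapping, non-nested, non-touching) proper 1PI UV-divergent subgraphs of $\Gamma$; $W(\Gamma)$ is the set of proper spinneys, and $\Gamma/S\in F$ is the graph obtained by contracting each element of $S$ to a point (it has the same external momenta and same overall degree of divergence as $\Gamma$). $H$ is a graded connected commutative Hopf algebra with coproduct $\Delta(\Gamma)=\Gamma\otimes\mathbb 1+\mathbb 1\otimes\Gamma+\sum_{S\in W(\Gamma)}\prod_{\gamma\in S}\gamma\otimes\Gamma/S$. For each $\Gamma\in F$, $A_\Gamma$ is a commutative unital algebra (regularised amplitudes, functions of the external momenta of $\Gamma$), and integration over internal momenta gives maps $A_{\gamma_1}\otimes\cdots\otimes A_{\gamma_n}\otimes A_{\Gamma/S}\to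 A_\Gamma$ for $S=\{\gamma_1,\dots,\gamma_n\}\in W(\Gamma)$; expressions like $\big(\prod_{\gamma\in S}x_\gamma\big)x_{\Gamma/S}$ denote the resulting element of $A_\Gamma$. An $F$-adapted linear form is a family of linear maps $\mathbb C\cdot\Gamma_1\cdots\Gamma_n\to (A_{\Gamma_1}\otimes\cdots\otimes A_{\Gamma_n})_{S_n}$; their convolution is $(\phi\ast\psi)(h)=\phi(h^{(1)})\psi(h^{(2)})$ (Sweedler notation, integrations understood). A character is a multiplicative unital $F$-adapted form ($\phi(hg)=\phi(h)\phi(g)$, $\phi(\mathbb 1)=1$); characters form a group $G$ under $\ast$ with unit $e$ (projection onto $H_0$). A subtraction scheme is a family of linear projectors $P_-^\Gamma$ on $A_\Gamma$, $\Gamma\in F$; set $P_+^\Gamma:=\mathrm{id}-P_-^\Gamma$. It is of regular type (RT) if for every $\Gamma\in F$, every $S\in W(\Gamma)$, every $x_\Gamma\in A_\Gamma$ and every family $x_\gamma\in A_\gamma$ ($\gamma\in S$): $P_+^\Gamma\big((\prod_{\gamma\in S}P_+^\gamma(x_\gamma))P_+^{\Gamma/S}(x_\Gamma)\big)=(\prod_{\gamma\in S}P_+^\gamma(x_\gamma))P_+^{\Gamma/S}(x_\Gamma)$. The induced operators $\mathcal P_\pm$ on $G$ are $\mathcal P_\pm(\phi)(\Gamma_1\cdots\Gamma_k):=P_\pm^{\Gamma_1}(\phi(\Gamma_1))\cdots P_\pm^{\Gamma_k}(\phi(\Gamma_k))$ for $\Gamma_i\in F$, and $\mathcal P_\pm(\phi)(\mathbb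 1)=1$. *)

theory Defs
  imports Complex_Main
begin

text \<open>
  Abstract data of a renormalisable QFT as used in the statement.
  \<^item> 'g : Feynman graphs; Fs : the set F of 1PI UV-divergent graphs.
  \<^item> 's : (indices of) spinneys; W \<Gamma> : the set of proper spinneys of \<Gamma>.
  \<^item> comps \<Gamma> S : the elements of the spinney S (as a list of graphs of F, one
    entry per subgraph, so isomorphic subgraphs are repeated).
  \<^item> quot \<Gamma> S : the contracted graph \<Gamma>/S.
  \<^item> 'x with scalar multiplication scl : common ambient commutative complex algebra;
    A \<Gamma> is the subalgebra A_\<Gamma>.
  \<^item> integ \<Gamma> S xs y : the integration map applied to (x_\<gamma>)_{\<gamma>\<in>S} and x_{\<Gamma>/S}.
\<close>

definition cx_subalgebra :: "(complex \<Rightarrow> 'x::comm_ring_1 \<Rightarrow> 'x) \<Rightarrow> 'x set \<Rightarrow> bool" where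
  "cx_subalgebra scl B \<longleftrightarrow> 0 \<in> B \<and> 1 \<in> B \<and> (\<forall>x\<in>B. \<forall>y\<in>B. x + y \<in> B \<and> x * y \<in> B)
     \<and> (\<forall>c. \<forall>x\<in>B. scl c x \<in> B)"

definition lin_on :: "(complex \<Rightarrow> 'x::comm_ring_1 \<Rightarrow> 'x) \<Rightarrow> 'x set \<Rightarrow> ('x \<Rightarrow> 'x) \<Rightarrow> bool" where
  "lin_on scl B f \<longleftrightarrow> (\<forall>x\<in>B. \<forall>y\<in>B. f (x + y) = f x + f y) \<and> (\<forall>c. \<forall>x\<in>B. f (scl c x) = scl c (f x))"

text \<open>The integration map for (\<Gamma>,S) is multilinear from A_\<gamma>1 x ... x A_\<gamma>n x A_{\<Gamma>/S} to A_\<Gamma>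
  (equivalently, a linear map on the tensor product).\<close>
definition integ_ok ::
  "(complex \<Rightarrow> 'x::comm_ring_1 \<Rightarrow> 'x) \<Rightarrow> ('g \<Rightarrow> 'x set) \<Rightarrow> 'g list \<Rightarrow> 'x set \<Rightarrow> 'x set
   \<Rightarrow> ('x list \<Rightarrow> 'x \<Rightarrow> 'x) \<Rightarrow> bool" where
  "integ_ok scl A gs Bq BG f \<longleftrightarrow>
     (\<forall>xs y. length xs = length gs \<and> (\<forall>i<length gs. xs ! i \<in> A (gs ! i)) \<and> y \<in> Bq \<longrightarrow>
        f xs y \<in> BG
        \<and> lin_on scl Bq (f xs)
        \<and> (\<forall>i<length gs. lin_on scl (A (gs ! i)) (\<lambda>z. f (xs[i := z]) y)))"

definition qft_data ::
  "'g set \<Rightarrow> ('g \<Rightarrow> 's set) \<Rightarrow> ('g \<Rightarrow> 's \<Rightarrow> 'g list) \<Rightarrow> ('g \<Rightarrow> 's \<Rightarrow> 'g)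
   \<Rightarrow> (complex \<Rightarrow> 'x::comm_ring_1 \<Rightarrow> 'x) \<Rightarrow> ('g \<Rightarrow> 'x set)
   \<Rightarrow> ('g \<Rightarrow> 's \<Rightarrow> 'x list \<Rightarrow> 'x \<Rightarrow> 'x) \<Rightarrow> bool" where
  "qft_data Fs W comps quot scl A integ \<longleftrightarrow>
     (\<forall>c d x y. scl c (x + y) = scl c x + scl c y \<and> scl (c + d) x = scl c x + scl d x
        \<and> scl c (scl d x) = scl (c * d) x \<and> scl 1 x = x \<and> scl c (x * y) = scl c x * y)
   \<and> (\<forall>\<Gamma>\<in>Fs. cx_subalgebra scl (A \<Gamma>))
   \<and> (\<forall>\<Gamma>\<in>Fs. finite (W \<Gamma>))
   \<and> (\<forall>\<Gamma>\<in>Fs. \<forall>S\<in>W \<Gamma>. comps \<Gamma> S \<noteq> [] \<and> set (comps \<Gamma> S) \<subseteq> Fs \<and> quot \<Gamma> S \<in> Fs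
        \<and> integ_ok scl A (comps \<Gamma> S) (A (quot \<Gamma> S)) (A \<Gamma>) (integ \<Gamma> S))"

definition subtraction_scheme ::
  "'g set \<Rightarrow> (complex \<Rightarrow> 'x::comm_ring_1 \<Rightarrow> 'x) \<Rightarrow> ('g \<Rightarrow> 'x set) \<Rightarrow> ('g \<Rightarrow> 'x \<Rightarrow> 'x) \<Rightarrow> bool" where
  "subtraction_scheme Fs scl A Pm \<longleftrightarrow>
     (\<forall>\<Gamma>\<in>Fs. lin_on scl (A \<Gamma>) (Pm \<Gamma>) \<and> (\<forall>x\<in>A \<Gamma>. Pm \<Gamma> x \<in> A \<Gamma> \<and> Pm \<Gamma> (Pm \<Gamma> x) = Pm \<Gamma> x))"

definition Pplus :: "('g \<Rightarrow> 'x::comm_ring_1 \<Rightarrow> 'x) \<Rightarrow> 'g \<Rightarrow> 'x \<Rightarrow> 'x" where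
  "Pplus Pm \<Gamma> x = x - Pm \<Gamma> x"

definition regular_type ::
  "'g set \<Rightarrow> ('g \<Rightarrow> 's set) \<Rightarrow> ('g \<Rightarrow> 's \<Rightarrow> 'g list) \<Rightarrow> ('g \<Rightarrow> 's \<Rightarrow> 'g)
   \<Rightarrow> ('g \<Rightarrow> 'x::comm_ring_1 set) \<Rightarrow> ('g \<Rightarrow> 's \<Rightarrow> 'x list \<Rightarrow> 'x \<Rightarrow> 'x) \<Rightarrow> ('g \<Rightarrow> 'x \<Rightarrow> 'x) \<Rightarrow> bool" where
  "regular_type Fs W comps quot A integ Pm \<longleftrightarrow>
     (\<forall>\<Gamma>\<in>Fs. \<forall>S\<in>W \<Gamma>. \<forall>xs y.
        length xs = length (comps \<Gamma> S) \<and> (\<forall>i<length xs. xs ! i \<in> A (comps \<Gamma> S ! i))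
        \<and> y \<in> A (quot \<Gamma> S) \<longrightarrow>
        Pplus Pm \<Gamma> (integ \<Gamma> S (map2 (Pplus Pm) (comps \<Gamma> S) xs) (Pplus Pm (quot \<Gamma> S) y))
          = integ \<Gamma> S (map2 (Pplus Pm) (comps \<Gamma> S) xs) (Pplus Pm (quot \<Gamma> S) y))"

text \<open>Characters are multiplicative and unital, hence determined by their values on the
  generators \<Gamma> \<in> F, with \<phi>(\<Gamma>) \<in> A_\<Gamma>.\<close>
definition is_character :: "'g set \<Rightarrow> ('g \<Rightarrow> 'x set) \<Rightarrow> ('g \<Rightarrow> 'x) \<Rightarrow> bool" where
  "is_character Fs A \<phi> \<longleftrightarrow> (\<forall>\<Gamma>\<in>Fs. \<phi> \<Gamma> \<in> A \<Gamma>)"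

text \<open>Convolution of characters on a generator \<Gamma>, from the coproduct
  \<Delta>\<Gamma> = \<Gamma>\<otimes>1 + 1\<otimes>\<Gamma> + \<Sum>_S \<Prod>_{\<gamma>\<in>S} \<gamma> \<otimes> \<Gamma>/S, with \<phi>(1) = \<psi>(1) = 1.\<close>
definition conv :: "('g \<Rightarrow> 's set) \<Rightarrow> ('g \<Rightarrow> 's \<Rightarrow> 'g list) \<Rightarrow> ('g \<Rightarrow> 's \<Rightarrow> 'g)
   \<Rightarrow> ('g \<Rightarrow> 's \<Rightarrow> 'x::comm_ring_1 list \<Rightarrow> 'x \<Rightarrow> 'x) \<Rightarrow> ('g \<Rightarrow> 'x) \<Rightarrow> ('g \<Rightarrow> 'x) \<Rightarrow> 'g \<Rightarrow> 'x" where
  "conv W comps quot integ \<phi> \<psi> \<Gamma> =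
     \<phi> \<Gamma> + \<psi> \<Gamma> + (\<Sum>S\<in>W \<Gamma>. integ \<Gamma> S (map \<phi> (comps \<Gamma> S)) (\<psi> (quot \<Gamma> S)))"

definition PPlus :: "('g \<Rightarrow> 'x::comm_ring_1 \<Rightarrow> 'x) \<Rightarrow> ('g \<Rightarrow> 'x) \<Rightarrow> 'g \<Rightarrow> 'x" where
  "PPlus Pm \<phi> \<Gamma> = Pplus Pm \<Gamma> (\<phi> \<Gamma>)"

end

theory Submission
  imports Defs
begin

text \<open>
  \<open>\<P>\<^sub>+(\<phi>) \<ast> \<P>\<^sub>+(\<psi>)\<close> evaluated on \<open>\<Gamma>\<close> is the sum of \<open>\<P>\<^sub>+(\<phi>)(\<Gamma>)\<close>, \<open>\<P>\<^sub>+(\<psi>)(\<Gamma>)\<close> and one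
  integrated term per proper spinney.  Since \<open>P\<^sub>+\<^sup>\<Gamma> = id - P\<^sub>-\<^sup>\<Gamma>\<close> is again a linear projector,
  it fixes the first two summands; regularity of the scheme says precisely that it fixes each
  spinney term.  A linear map fixes any sum of its fixed points.
\<close>

definition scalar_action :: "(complex \<Rightarrow> 'x::comm_ring_1 \<Rightarrow> 'x) \<Rightarrow> bool" where
  "scalar_action scl \<longleftrightarrow>
     (\<forall>c d x y. scl c (x + y) = scl c x + scl c y \<and> scl (c + d) x = scl c x + scl d x
        \<and> scl c (scl d x) = scl (c * d) x \<and> scl 1 x = x \<and> scl c (x * y) = scl c x * y)"

definition projector_on :: "(complex \<Rightarrow> 'x::comm_ring_1 \<Rightarrow> 'x) \<Rightarrow> 'x set \<Rightarrow> ('x \<Rightarrow> 'x) \<Rightarrow> bool" where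
  "projector_on scl B P \<longleftrightarrow> lin_on scl B P \<and> (\<forall>x\<in>B. P x \<in> B \<and> P (P x) = P x)"

lemma qft_data_scalar_action:
  "qft_data Fs W comps quot scl A integ \<Longrightarrow> scalar_action scl"
  unfolding qft_data_def scalar_action_def by blast

lemma subtraction_scheme_projector_on:
  "subtraction_scheme Fs scl A Pm \<Longrightarrow> \<Gamma> \<in> Fs \<Longrightarrow> projector_on scl (A \<Gamma>) (Pm \<Gamma>)"
  unfolding subtraction_scheme_def projector_on_def by blast

lemma scalar_action_diff:
  assumes "scalar_action scl"
  shows "scl c (x - y) = scl c x - scl c y"
proof -
  have "scl c x = scl c (x - y) + scl c y"
    using assms unfolding scalar_action_def by (metis diff_add_cancel)
  then show ?thesis by (simp add: algebra_simps)
qed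

lemma scalar_action_minus_one:
  assumes "scalar_action scl"
  shows "scl (-1) x = - x"
proof -
  have "scl 0 x = scl 0 x + scl 0 x"
    using assms unfolding scalar_action_def by (metis add_0)
  then have "scl 0 x = 0" by simp
  moreover have "scl 0 x = x + scl (-1) x"
    using assms unfolding scalar_action_def by (metis add.right_inverse)
  ultimately show ?thesis by (simp add: eq_neg_iff_add_eq_0 add.commute)
qed

lemma cx_subalgebra_diff:
  assumes "scalar_action scl" "cx_subalgebra scl B" "x \<in> B" "y \<in> B"
  shows "x - y \<in> B"
proof -
  have "scl (-1) y \<in> B" using assms(2,4) unfolding cx_subalgebra_def by blast
  then have "- y \<in> B" using scalar_action_minus_one[OF assms(1)] by simp
  then show ?thesis using assms(2,3) unfolding cx_subalgebra_def by (metis diff_conv_add_uminus)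
qed

lemma lin_on_diff:
  assumes "lin_on scl B f" "x - y \<in> B" "y \<in> B"
  shows "f (x - y) = f x - f y"
proof -
  have "f x = f (x - y) + f y"
    using assms unfolding lin_on_def by (metis diff_add_cancel)
  then show ?thesis by simp
qed

lemma projector_on_complement:
  assumes "scalar_action scl" "cx_subalgebra scl B" "projector_on scl B P"
  shows "projector_on scl B (\<lambda>x. x - P x)"
proof -
  have lin: "lin_on scl B P" and P: "\<And>x. x \<in> B \<Longrightarrow> P x \<in> B \<and> P (P x) = P x"
    using assms(3) unfolding projector_on_def by blast+
  have closed: "\<And>x y. x \<in> B \<Longrightarrow> y \<in> B \<Longrightarrow> x + y \<in> B" "\<And>c x. x \<in> B \<Longrightarrow> scl c x \<in> B"
    using assms(2) unfolding cx_subalgebra_def by blast+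
  have diff: "\<And>x y. x \<in> B \<Longrightarrow> y \<in> B \<Longrightarrow> x - y \<in> B"
    using cx_subalgebra_diff[OF assms(1,2)] by blast
  have "lin_on scl B (\<lambda>x. x - P x)"
    using lin closed unfolding lin_on_def by (simp add: scalar_action_diff[OF assms(1)] algebra_simps)
  moreover have "x - P x \<in> B \<and> (x - P x) - P (x - P x) = x - P x" if "x \<in> B" for x
    using P[OF that] lin_on_diff[OF lin] diff that by simp
  ultimately show ?thesis unfolding projector_on_def by blast
qed

lemma Pplus_projector_on:
  assumes "qft_data Fs W comps quot scl A integ" "subtraction_scheme Fs scl A Pm" "\<Gamma> \<in> Fs"
  shows "projector_on scl (A \<Gamma>) (Pplus Pm \<Gamma>)"
proof -
  have "cx_subalgebra scl (A \<Gamma>)" using assms(1,3) unfolding qft_data_def by blast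
  then have "projector_on scl (A \<Gamma>) (\<lambda>x. x - Pm \<Gamma> x)"
    using projector_on_complement qft_data_scalar_action[OF assms(1)]
      subtraction_scheme_projector_on[OF assms(2,3)] by blast
  then show ?thesis by (simp add: Pplus_def[abs_def])
qed

lemma lin_on_fixes_sum:
  assumes "cx_subalgebra scl B" "lin_on scl B f" "\<forall>i\<in>I. g i \<in> B \<and> f (g i) = g i"
  shows "(\<Sum>i\<in>I. g i) \<in> B \<and> f (\<Sum>i\<in>I. g i) = (\<Sum>i\<in>I. g i)"
proof -
  have zero: "0 \<in> B" and add: "\<And>x y. x \<in> B \<Longrightarrow> y \<in> B \<Longrightarrow> x + y \<in> B"
    using assms(1) unfolding cx_subalgebra_def by blast+
  have f_add: "\<And>x y. x \<in> B \<Longrightarrow> y \<in> B \<Longrightarrow> f (x + y) = f x + f y"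
    using assms(2) unfolding lin_on_def by blast
  have "f 0 = 0" using f_add[OF zero zero] by simp
  show ?thesis
  proof (cases "finite I")
    case True
    then show ?thesis using assms(3)
      by (induction I rule: finite_induct) (auto simp: zero \<open>f 0 = 0\<close> add f_add)
  qed (simp add: zero \<open>f 0 = 0\<close>)
qed

lemma regular_type_spinney_term:
  assumes "qft_data Fs W comps quot scl A integ" "subtraction_scheme Fs scl A Pm"
    and "regular_type Fs W comps quot A integ Pm"
    and "is_character Fs A \<phi>" "is_character Fs A \<psi>" "\<Gamma> \<in> Fs" "S \<in> W \<Gamma>"
  defines "t \<equiv> integ \<Gamma> S (map (PPlus Pm \<phi>) (comps \<Gamma> S)) (PPlus Pm \<psi> (quot \<Gamma> S))"
  shows "t \<in> A \<Gamma> \<and> Pplus Pm \<Gamma> t = t"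
proof -
  have S: "set (comps \<Gamma> S) \<subseteq> Fs" "quot \<Gamma> S \<in> Fs"
    and integ: "integ_ok scl A (comps \<Gamma> S) (A (quot \<Gamma> S)) (A \<Gamma>) (integ \<Gamma> S)"
    using assms(1,6,7) unfolding qft_data_def by blast+
  have Pplus_mem: "\<And>H x. H \<in> Fs \<Longrightarrow> x \<in> A H \<Longrightarrow> Pplus Pm H x \<in> A H"
    using Pplus_projector_on[OF assms(1,2)] unfolding projector_on_def by blast
  have map_PPlus: "map (PPlus Pm \<phi>) (comps \<Gamma> S) = map2 (Pplus Pm) (comps \<Gamma> S) (map \<phi> (comps \<Gamma> S))"
    by (simp add: PPlus_def zip_map2 map_zip_map2 zip_same_conv_map comp_def)
  have \<phi>_mem: "\<forall>i<length (map \<phi> (comps \<Gamma> S)). map \<phi> (comps \<Gamma> S) ! i \<in> A (comps \<Gamma> S ! i)"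
    using assms(4) S(1) unfolding is_character_def by (auto simp: subset_iff)
  have \<psi>_mem: "\<psi> (quot \<Gamma> S) \<in> A (quot \<Gamma> S)"
    using assms(5) S(2) unfolding is_character_def by blast
  have "Pplus Pm \<Gamma> t = t"
    using assms(3,6,7) \<phi>_mem \<psi>_mem unfolding regular_type_def t_def map_PPlus PPlus_def by auto
  moreover have "t \<in> A \<Gamma>"
    using integ Pplus_mem \<phi>_mem \<psi>_mem S unfolding integ_ok_def t_def PPlus_def
    by (auto simp: subset_iff)
  ultimately show ?thesis by blast
qed

theorem lemma4p1:
  fixes Fs :: "'g set" and W :: "'g \<Rightarrow> 's set" and comps :: "'g \<Rightarrow> 's \<Rightarrow> 'g list"
    and quot :: "'g \<Rightarrow> 's \<Rightarrow> 'g" and scl :: "complex \<Rightarrow> 'x::comm_ring_1 \<Rightarrow> 'x"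
    and A :: "'g \<Rightarrow> 'x set" and integ :: "'g \<Rightarrow> 's \<Rightarrow> 'x list \<Rightarrow> 'x \<Rightarrow> 'x"
    and Pm :: "'g \<Rightarrow> 'x \<Rightarrow> 'x" and \<phi> \<psi> :: "'g \<Rightarrow> 'x"
  assumes "qft_data Fs W comps quot scl A integ"
    and "subtraction_scheme Fs scl A Pm"
    and "regular_type Fs W comps quot A integ Pm"
    and "is_character Fs A \<phi>" and "is_character Fs A \<psi>"
  shows "\<forall>\<Gamma>\<in>Fs. PPlus Pm (conv W comps quot integ (PPlus Pm \<phi>) (PPlus Pm \<psi>)) \<Gamma>
                  = conv W comps quot integ (PPlus Pm \<phi>) (PPlus Pm \<psi>) \<Gamma>"
proof
  fix \<Gamma> assume \<Gamma>: "\<Gamma> \<in> Fs"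
  define t where "t S = integ \<Gamma> S (map (PPlus Pm \<phi>) (comps \<Gamma> S)) (PPlus Pm \<psi> (quot \<Gamma> S))" for S
  let ?P = "Pplus Pm \<Gamma>" and ?\<Sigma> = "\<Sum>S\<in>W \<Gamma>. t S"
  have B: "cx_subalgebra scl (A \<Gamma>)" using assms(1) \<Gamma> unfolding qft_data_def by blast
  have P: "projector_on scl (A \<Gamma>) ?P" using Pplus_projector_on[OF assms(1,2) \<Gamma>] .
  then have lin: "lin_on scl (A \<Gamma>) ?P" unfolding projector_on_def by blast
  have fixed_\<chi>: "PPlus Pm \<chi> \<Gamma> \<in> A \<Gamma> \<and> ?P (PPlus Pm \<chi> \<Gamma>) = PPlus Pm \<chi> \<Gamma>"
    if "is_character Fs A \<chi>" for \<chi>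
    using P that \<Gamma> unfolding projector_on_def is_character_def PPlus_def by blast
  have "\<forall>S\<in>W \<Gamma>. t S \<in> A \<Gamma> \<and> ?P (t S) = t S"
    using regular_type_spinney_term[OF assms \<Gamma>] unfolding t_def by blast
  then have fixed_\<Sigma>: "?\<Sigma> \<in> A \<Gamma> \<and> ?P ?\<Sigma> = ?\<Sigma>"
    using lin_on_fixes_sum[OF B lin] by blast
  have add: "\<And>x y. x \<in> A \<Gamma> \<Longrightarrow> y \<in> A \<Gamma> \<Longrightarrow> x + y \<in> A \<Gamma> \<and> ?P (x + y) = ?P x + ?P y"
    using lin B unfolding lin_on_def cx_subalgebra_def by blast
  have "conv W comps quot integ (PPlus Pm \<phi>) (PPlus Pm \<psi>) \<Gamma> = PPlus Pm \<phi> \<Gamma> + PPlus Pm \<psi> \<Gamma> + ?\<Sigma>"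
    unfolding conv_def t_def ..
  then show "PPlus Pm (conv W comps quot integ (PPlus Pm \<phi>) (PPlus Pm \<psi>)) \<Gamma>
      = conv W comps quot integ (PPlus Pm \<phi>) (PPlus Pm \<psi>) \<Gamma>"
    using add fixed_\<chi>[OF assms(4)] fixed_\<chi>[OF assms(5)] fixed_\<Sigma>
    by (simp only: PPlus_def[of Pm "conv _ _ _ _ _ _"])
qed

end
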